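(* Let $\mathcal{G}$ be the real Lie algebra with basis $X_1,X_2,X_3$ and brackets $[X_1,X_2]=-X_2-X_3$, $[X_2,X_3]=0$, $[X_3,X_1]=X_2+X_3$ (Bianchi type $III$). Every real Manin triple $(\mathcal{D},\mathcal{G}',\tilde{\mathcal{G}}')$ with $\mathcal{G}'\cong\mathcal{G}$ is isomorphic to exactly one Manin triple $(\mathcal{D},\mathcal{G},\tilde{\mathcal{G}})$ in which $\tilde{\mathcal{G}}$, in the basis $\tilde X^1,\tilde X^2,\tilde X^3$ dual to $X_1,X_2,X_3$, has one of the following bracket structures: (a) (Bianchi $I$) all brackets zero; (b) (Bianchi $II$) $[\tilde X^1,\tilde X^2]=0$, $[\tilde X^2,\tilde X^3]=\tilde X^1$, $[\tilde X^3,\tilde X^1]=0$; (c) (Bianchi $III$) (i) $[\tilde X^1,\tilde X^2]=-b(\tilde X^2+\tilde X^3)$, $[\tilde X^2,\tilde X^3]=0$, $[\tilde X^3,\tilde X^1]=b(\tilde X^2+\tilde X^3)$, $b\in\mathbb{R}\setminus\{0\}$; (ii) $[\tilde X^1,\tilde X^2]=0$, $[\tilde X^2,\tilde X^3]=\tilde X^2+\tilde X^3$, $[\tilde X^3,\tilde X^1]=0$; (iii) $[\tilde X^1,\tilde X^2]=\tilde X^1$, $[\tilde X^2,\tilde X^3]=0$, $[\tilde X^3,\tilde X^1]=-\tilde X^1$.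
   Context: A real Manin triple $(\mathcal{D},\mathcal{G},\tilde{\mathcal{G}})$ consists of a real Lie algebra $\mathcal{D}$ with a symmetric, ad-invariant, nondegenerate bilinear form $\langle\cdot,\cdot\rangle$, and two maximally isotropic Lie subalgebras $\mathcal{G},\tilde{\mathcal{G}}$ with $\mathcal{D}=\mathcal{G}\oplus\tilde{\mathcal{G}}$ as vector spaces; here $\dim\mathcal{D}=6$, $\dim\mathcal{G}=\dim\tilde{\mathcal{G}}=3$. Bases $X_i$ of $\mathcal{G}$ and $\tilde X^i$ of $\tilde{\mathcal{G}}$ are dual if $\langle X_i,X_j\rangle=0$, $\langle X_i,\tilde X^j\rangle=\delta_i^j$, $\langle\tilde X^i,\tilde X^j\rangle=0$. If $[X_i,X_j]=f_{ij}{}^kX_k$ and $[\tilde X^i,\tilde X^j]=\tilde f^{ij}{}_k\tilde X^k$, ad-invariance forces $[X_i,\tilde X^j]=f_{ki}{}^j\tilde X^k+\tilde f^{jk}{}_iX_k$, so the triple is determined by the brackets of $\mathcal{G}$ and $\tilde{\mathcal{G}}$ in dual bases. Two Manin triples are isomorphic if there is a Lie algebra isomorphism of the doubles preserving the bilinear forms and mapping first subalgebra to first subalgebra and second to second; equivalently, they are related by a change of basis $X_i'=X_kA^k{}_i$, $\tilde X'^j=(A^{-1})^j{}_k\tilde X^k$. Different values of the parameter $b$ give non-isomorphic triples. *)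

theory Defs
  imports "HOL-Analysis.Analysis"
begin

datatype idx = I1 | I2 | I3

lemma UNIV_idx: "(UNIV :: idx set) = {I1, I2, I3}"
  using idx.exhaust by blast

instance idx :: finite
  by standard (simp add: UNIV_idx)

text \<open>Structure constants of a 3-dimensional algebra: sc i j k is the coefficient
  f_{ij}^k in [X_i, X_j] = sum_k f_{ij}^k X_k.\<close>

type_synonym sconst = "idx \<Rightarrow> idx \<Rightarrow> idx \<Rightarrow> real"

definition vec3 :: "real \<Rightarrow> real \<Rightarrow> real \<Rightarrow> idx \<Rightarrow> real" where
  "vec3 a b c = (\<lambda>i. case i of I1 \<Rightarrow> a | I2 \<Rightarrow> b | I3 \<Rightarrow> c)"

definition sc3 :: "(idx \<Rightarrow> real) \<Rightarrow> (idx \<Rightarrow> real) \<Rightarrow> (idx \<Rightarrow> real) \<Rightarrow> sconst" where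
  "sc3 c12 c23 c31 = (\<lambda>i j k. case (i, j) of
      (I1, I2) \<Rightarrow> c12 k | (I2, I1) \<Rightarrow> - c12 k
    | (I2, I3) \<Rightarrow> c23 k | (I3, I2) \<Rightarrow> - c23 k
    | (I3, I1) \<Rightarrow> c31 k | (I1, I3) \<Rightarrow> - c31 k
    | _ \<Rightarrow> 0)"

text \<open>The Drinfeld double D = G + G~ with basis Inl i = X_i, Inr i = X~^i.
  double_sc f ft a b c is the coefficient of basis vector c in [a, b], using
  [X_i,X_j] = f_{ij}^k X_k, [X~^i,X~^j] = ft^{ij}_k X~^k,
  [X_i,X~^j] = f_{ki}^j X~^k + ft^{jk}_i X_k.\<close>

definition double_sc :: "sconst \<Rightarrow> sconst \<Rightarrow> (idx + idx) \<Rightarrow> (idx + idx) \<Rightarrow> (idx + idx) \<Rightarrow> real" where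
  "double_sc f ft a b c = (case (a, b, c) of
      (Inl i, Inl j, Inl k) \<Rightarrow> f i j k
    | (Inl i, Inl j, Inr k) \<Rightarrow> 0
    | (Inr i, Inr j, Inr k) \<Rightarrow> ft i j k
    | (Inr i, Inr j, Inl k) \<Rightarrow> 0
    | (Inl i, Inr j, Inr k) \<Rightarrow> f k i j
    | (Inl i, Inr j, Inl k) \<Rightarrow> ft j k i
    | (Inr j, Inl i, Inr k) \<Rightarrow> - f k i j
    | (Inr j, Inl i, Inl k) \<Rightarrow> - ft j k i)"

definition double_form :: "(idx + idx) \<Rightarrow> (idx + idx) \<Rightarrow> real" where
  "double_form a b = (case (a, b) of
      (Inl i, Inr j) \<Rightarrow> (if i = j then 1 else 0)
    | (Inr i, Inl j) \<Rightarrow> (if i = j then 1 else 0)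
    | _ \<Rightarrow> 0)"

definition lie_sc :: "('b::finite \<Rightarrow> 'b \<Rightarrow> 'b \<Rightarrow> real) \<Rightarrow> bool" where
  "lie_sc C \<longleftrightarrow>
     (\<forall>a b c. C a b c = - C b a c) \<and>
     (\<forall>a b c e. (\<Sum>d\<in>UNIV. C a b d * C d c e + C b c d * C d a e + C c a d * C d b e) = 0)"

definition ad_invariant :: "('b::finite \<Rightarrow> 'b \<Rightarrow> 'b \<Rightarrow> real) \<Rightarrow> ('b \<Rightarrow> 'b \<Rightarrow> real) \<Rightarrow> bool" where
  "ad_invariant C g \<longleftrightarrow>
     (\<forall>a b c. (\<Sum>d\<in>UNIV. C a b d * g d c) + (\<Sum>d\<in>UNIV. C a c d * g b d) = 0)"

text \<open>(f, ft) are the structure constants, in dual bases, of a real Manin triple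
  (D, G, G~): the double is a Lie algebra and the canonical pairing is ad-invariant.
  (Symmetry, nondegeneracy, isotropy of G and G~ and D = G + G~ hold by construction.)\<close>

definition manin_triple :: "sconst \<Rightarrow> sconst \<Rightarrow> bool" where
  "manin_triple f ft \<longleftrightarrow>
     lie_sc (double_sc f ft) \<and> ad_invariant (double_sc f ft) double_form"

text \<open>Change of basis X'_i = X_k A^k_i (with A^k_i = A $ k $ i): new structure constants.\<close>

definition basis_change :: "real^idx^idx \<Rightarrow> sconst \<Rightarrow> sconst" where
  "basis_change A f = (\<lambda>i j n. \<Sum>k\<in>UNIV. \<Sum>l\<in>UNIV. \<Sum>m\<in>UNIV.
       A$k$i * A$l$j * f k l m * matrix_inv A $ n $ m)"

text \<open>Corresponding change of the dual basis X~'^j = (A^{-1})^j_k X~^k.\<close>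

definition dual_basis_change :: "real^idx^idx \<Rightarrow> sconst \<Rightarrow> sconst" where
  "dual_basis_change A ft = (\<lambda>i j n. \<Sum>k\<in>UNIV. \<Sum>l\<in>UNIV. \<Sum>m\<in>UNIV.
       matrix_inv A $ i $ k * matrix_inv A $ j $ l * ft k l m * A$m$n)"

definition lie_isomorphic :: "sconst \<Rightarrow> sconst \<Rightarrow> bool" where
  "lie_isomorphic f1 f2 \<longleftrightarrow> (\<exists>A. invertible A \<and> basis_change A f1 = f2)"

definition manin_isomorphic :: "sconst \<Rightarrow> sconst \<Rightarrow> sconst \<Rightarrow> sconst \<Rightarrow> bool" where
  "manin_isomorphic f1 ft1 f2 ft2 \<longleftrightarrow>
     (\<exists>A. invertible A \<and> basis_change A f1 = f2 \<and> dual_basis_change A ft1 = ft2)"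

definition bianchiIII :: sconst where
  "bianchiIII = sc3 (vec3 0 (-1) (-1)) (vec3 0 0 0) (vec3 0 1 1)"

definition dual_I :: sconst where
  "dual_I = sc3 (vec3 0 0 0) (vec3 0 0 0) (vec3 0 0 0)"

definition dual_II :: sconst where
  "dual_II = sc3 (vec3 0 0 0) (vec3 1 0 0) (vec3 0 0 0)"

definition dual_III_i :: "real \<Rightarrow> sconst" where
  "dual_III_i b = sc3 (vec3 0 (-b) (-b)) (vec3 0 0 0) (vec3 0 b b)"

definition dual_III_ii :: sconst where
  "dual_III_ii = sc3 (vec3 0 0 0) (vec3 0 1 1) (vec3 0 0 0)"

definition dual_III_iii :: sconst where
  "dual_III_iii = sc3 (vec3 1 0 0) (vec3 0 0 0) (vec3 (-1) 0 0)"

definition normal_forms :: "sconst set" where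
  "normal_forms = {dual_I, dual_II, dual_III_ii, dual_III_iii} \<union> {dual_III_i b | b. b \<noteq> 0}"

end

theory Submission
  imports Defs
begin

text \<open>Transporting the triple along an isomorphism G' = G reduces everything to Manin triples
  whose first algebra is Bianchi III itself. For these the Jacobi identity of the double forces the
  dual brackets into a four-parameter family dual_sc S P U R subject to P U = R S. The automorphisms
  of Bianchi III are the matrices bianchiIII_aut x w y z with y^2 \<noteq> z^2, and their contragredient
  action on (S, P, U, R) is explicit: P is invariant, while S, R and U are divided by y + z, y - z
  and y^2 - z^2 after shifts by multiples of P, R and S. Normalising the parameters case by case
  gives the existence of a normal form; since P, and for P = 0 the vanishing of S, R and then of U,
  are invariants, two normal forms in one orbit coincide.\<close>

lemma sum_UNIV_idx: "(\<Sum>i\<in>UNIV. g i) = g I1 + g I2 + g I3"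
  by (simp add: UNIV_idx add.assoc)

lemma all_idx: "(\<forall>i::idx. P i) \<longleftrightarrow> P I1 \<and> P I2 \<and> P I3"
  by (metis idx.exhaust)

lemma sum_UNIV_Plus:
  "(\<Sum>x\<in>(UNIV::('a::finite + 'b::finite) set). g x) = (\<Sum>i\<in>UNIV. g (Inl i)) + (\<Sum>i\<in>UNIV. g (Inr i))"
  by (subst UNIV_Plus_UNIV[symmetric], subst sum.Plus) (auto simp: comp_def)

lemma matrix_inv_mult:
  fixes A :: "'a::semiring_1^'n^'n"
  assumes "invertible A"
  shows "A ** matrix_inv A = mat 1" and "matrix_inv A ** A = mat 1"
proof -
  have "\<exists>B. A ** B = mat 1 \<and> B ** A = mat 1"
    using assms unfolding invertible_def .
  then have "A ** matrix_inv A = mat 1 \<and> matrix_inv A ** A = mat 1"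
    unfolding matrix_inv_def by (rule someI_ex)
  then show "A ** matrix_inv A = mat 1" and "matrix_inv A ** A = mat 1" by auto
qed

lemma mat_1_mult_eq_if: "mat 1 $ p $ i * x = (if p = i then x else (0::'a::semiring_1))"
  by (simp add: mat_def)

lemma sum_swap_pairs:
  "(\<Sum>a\<in>A. \<Sum>b\<in>B. \<Sum>c\<in>C. \<Sum>d\<in>D. f a b c d) = (\<Sum>c\<in>C. \<Sum>d\<in>D. \<Sum>a\<in>A. \<Sum>b\<in>B. f a b c d)"
proof -
  have "(\<Sum>a\<in>A. \<Sum>b\<in>B. \<Sum>c\<in>C. \<Sum>d\<in>D. f a b c d) = (\<Sum>a\<in>A. \<Sum>c\<in>C. \<Sum>d\<in>D. \<Sum>b\<in>B. f a b c d)"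
    by (simp only: sum.swap[of _ B])
  also have "\<dots> = (\<Sum>c\<in>C. \<Sum>d\<in>D. \<Sum>a\<in>A. \<Sum>b\<in>B. f a b c d)"
    by (simp only: sum.swap[of _ A])
  finally show ?thesis .
qed

lemma sum_rotate3:
  "(\<Sum>a\<in>A. \<Sum>b\<in>B. \<Sum>c\<in>C. f a b c) = (\<Sum>c\<in>C. \<Sum>a\<in>A. \<Sum>b\<in>B. f a b c)"
proof -
  have "(\<Sum>a\<in>A. \<Sum>b\<in>B. \<Sum>c\<in>C. f a b c) = (\<Sum>a\<in>A. \<Sum>c\<in>C. \<Sum>b\<in>B. f a b c)"
    by (rule sum.cong[OF refl], rule sum.swap)
  also have "\<dots> = (\<Sum>c\<in>C. \<Sum>a\<in>A. \<Sum>b\<in>B. f a b c)"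
    by (rule sum.swap)
  finally show ?thesis .
qed

lemma sum_move_in3:
  "(\<Sum>z\<in>Z. \<Sum>x\<in>X. \<Sum>y\<in>Y. \<Sum>v\<in>V. f z x y v) = (\<Sum>x\<in>X. \<Sum>y\<in>Y. \<Sum>v\<in>V. \<Sum>z\<in>Z. f z x y v)"
  by (subst sum.swap, rule sum.cong[OF refl], subst sum.swap, rule sum.cong[OF refl], rule sum.swap)

lemma sum_contract:
  fixes M N :: "'a::comm_semiring_1^'n^'n"
  assumes "M ** N = mat 1"
  shows "(\<Sum>d\<in>UNIV. (\<Sum>z\<in>UNIV. N$d$z * m z) * (\<Sum>u\<in>UNIV. M$u$d * k u)) = (\<Sum>z\<in>UNIV. m z * k z)"
proof -
  have "(\<Sum>d\<in>UNIV. (\<Sum>z\<in>UNIV. N$d$z * m z) * (\<Sum>u\<in>UNIV. M$u$d * k u))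
      = (\<Sum>d\<in>UNIV. \<Sum>z\<in>UNIV. \<Sum>u\<in>UNIV. N$d$z * m z * (M$u$d * k u))"
    by (simp only: sum_product)
  also have "\<dots> = (\<Sum>z\<in>UNIV. \<Sum>u\<in>UNIV. \<Sum>d\<in>UNIV. N$d$z * m z * (M$u$d * k u))"
    by (rule sum_rotate3[symmetric])
  also have "\<dots> = (\<Sum>z\<in>UNIV. \<Sum>u\<in>UNIV. (M ** N)$u$z * (m z * k u))"
    by (simp add: matrix_matrix_mult_def sum_distrib_left sum_distrib_right mult_ac)
  also have "\<dots> = (\<Sum>z\<in>UNIV. m z * k z)"
    using assms by (simp add: mat_1_mult_eq_if)
  finally show ?thesis .
qed

section \<open>Structure constants under change of basis\<close>

type_synonym ('a, 'n) struct_const = "'n \<Rightarrow> 'n \<Rightarrow> 'n \<Rightarrow> 'a"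

text \<open>For structure constants C with respect to a basis e_i, sc_pull M C i j is the coordinate
  vector of [M e_i, M e_j] and sc_push M C i j that of M [e_i, e_j]. Thus sc_hom M C D below says
  that M is a homomorphism from the bracket C to the bracket D.\<close>

definition sc_pull :: "'a::comm_semiring_1^'n^'n \<Rightarrow> ('a, 'n::finite) struct_const \<Rightarrow> ('a, 'n) struct_const" where
  "sc_pull M C = (\<lambda>i j k. \<Sum>p\<in>UNIV. \<Sum>q\<in>UNIV. M$p$i * M$q$j * C p q k)"

definition sc_push :: "'a::comm_semiring_1^'n^'n \<Rightarrow> ('a, 'n::finite) struct_const \<Rightarrow> ('a, 'n) struct_const" where
  "sc_push M C = (\<lambda>i j k. \<Sum>r\<in>UNIV. M$k$r * C i j r)"

lemma sc_pull_mult: "sc_pull (A ** B) C = sc_pull B (sc_pull A C)"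
proof (intro ext)
  fix i j k
  have "sc_pull (A ** B) C i j k
      = (\<Sum>p\<in>UNIV. \<Sum>q\<in>UNIV. (\<Sum>s\<in>UNIV. A$p$s * B$s$i) * (\<Sum>t\<in>UNIV. A$q$t * B$t$j) * C p q k)"
    by (simp add: sc_pull_def matrix_matrix_mult_def)
  also have "\<dots> = (\<Sum>p\<in>UNIV. \<Sum>q\<in>UNIV. \<Sum>s\<in>UNIV. \<Sum>t\<in>UNIV. A$p$s * B$s$i * (A$q$t * B$t$j) * C p q k)"
    by (simp only: sum_product, simp only: sum_distrib_right)
  also have "\<dots> = sc_pull B (sc_pull A C) i j k"
    by (subst sum_swap_pairs) (simp add: sc_pull_def sum_distrib_left mult_ac)
  finally show "sc_pull (A ** B) C i j k = sc_pull B (sc_pull A C) i j k" .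
qed

lemma sc_push_mult: "sc_push (A ** B) C = sc_push A (sc_push B C)"
proof (intro ext)
  fix i j k
  show "sc_push (A ** B) C i j k = sc_push A (sc_push B C) i j k"
    unfolding sc_push_def matrix_matrix_mult_def vec_lambda_beta sum_distrib_left sum_distrib_right
    by (subst sum.swap) (simp add: mult_ac)
qed

lemma sc_pull_push_commute: "sc_pull A (sc_push B C) = sc_push B (sc_pull A C)"
proof (intro ext)
  fix i j k
  show "sc_pull A (sc_push B C) i j k = sc_push B (sc_pull A C) i j k"
    unfolding sc_push_def sc_pull_def sum_distrib_left sum_distrib_right
    by (subst (2) sum.swap, subst sum.swap) (simp add: mult_ac)
qed

lemma sc_pull_mat_1 [simp]: "sc_pull (mat 1) C = C"
proof (intro ext)
  fix i j k
  have "sc_pull (mat 1) C i j k = (\<Sum>p\<in>UNIV. mat 1 $ p $ i * (\<Sum>q\<in>UNIV. mat 1 $ q $ j * C p q k))"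
    by (simp add: sc_pull_def sum_distrib_left mult.assoc)
  then show "sc_pull (mat 1) C i j k = C i j k"
    by (simp add: mat_1_mult_eq_if)
qed

lemma sc_push_mat_1 [simp]: "sc_push (mat 1) C = C"
  by (simp add: sc_push_def fun_eq_iff mat_1_mult_eq_if)

definition sc_hom :: "'a::comm_semiring_1^'n^'n \<Rightarrow> ('a, 'n::finite) struct_const \<Rightarrow> ('a, 'n) struct_const \<Rightarrow> bool" where
  "sc_hom M C D \<longleftrightarrow> sc_push M C = sc_pull M D"

lemma sc_hom_mult:
  assumes "sc_hom A C D" and "sc_hom B D E"
  shows "sc_hom (B ** A) C E"
proof -
  have "sc_push (B ** A) C = sc_push B (sc_pull A D)"
    using assms(1) by (simp add: sc_hom_def sc_push_mult)
  also have "\<dots> = sc_pull A (sc_push B D)"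
    by (simp add: sc_pull_push_commute)
  also have "\<dots> = sc_pull (B ** A) E"
    using assms(2) by (simp add: sc_hom_def sc_pull_mult)
  finally show ?thesis
    unfolding sc_hom_def .
qed

lemma sc_hom_inverse:
  assumes "A ** B = mat 1" and "B ** A = mat 1" and "sc_hom A C D"
  shows "sc_hom B D C"
proof -
  have "sc_pull B C = sc_pull B (sc_push B (sc_push A C))"
    using assms(2) by (simp flip: sc_push_mult)
  also have "\<dots> = sc_push B (sc_pull (A ** B) D)"
    using assms(3) by (simp add: sc_hom_def sc_pull_mult sc_pull_push_commute)
  finally show ?thesis
    using assms(1) by (simp add: sc_hom_def)
qed

lemma sc_push_pull_eq_iff:
  assumes "A ** B = mat 1" and "B ** A = mat 1"
  shows "sc_push B (sc_pull A C) = D \<longleftrightarrow> sc_hom A D C"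
proof
  assume "sc_push B (sc_pull A C) = D"
  then show "sc_hom A D C"
    using assms(1) by (auto simp: sc_hom_def simp flip: sc_push_mult)
next
  assume "sc_hom A D C"
  then have "sc_push B (sc_pull A C) = sc_push B (sc_push A D)"
    by (simp add: sc_hom_def)
  then show "sc_push B (sc_pull A C) = D"
    using assms(2) by (simp flip: sc_push_mult)
qed

lemma basis_change_eq_sc_push_pull: "basis_change A f = sc_push (matrix_inv A) (sc_pull A f)"
proof (intro ext)
  fix i j n
  show "basis_change A f i j n = sc_push (matrix_inv A) (sc_pull A f) i j n"
    unfolding basis_change_def sc_push_def sc_pull_def sum_distrib_left
    by (subst sum_rotate3) (simp add: mult_ac)
qed

lemma dual_basis_change_eq_sc_push_pull:
  "dual_basis_change A ft = sc_push (transpose A) (sc_pull (transpose (matrix_inv A)) ft)"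
proof (intro ext)
  fix i j n
  show "dual_basis_change A ft i j n = sc_push (transpose A) (sc_pull (transpose (matrix_inv A)) ft) i j n"
    unfolding dual_basis_change_def sc_push_def sc_pull_def transpose_def vec_lambda_beta sum_distrib_left
    by (subst sum_rotate3) (simp add: mult_ac)
qed

lemma basis_change_eq_iff:
  assumes "invertible A"
  shows "basis_change A f = g \<longleftrightarrow> sc_hom A g f"
  unfolding basis_change_eq_sc_push_pull
  using matrix_inv_mult[OF assms] by (rule sc_push_pull_eq_iff)

lemma dual_basis_change_eq_iff:
  assumes "invertible A"
  shows "dual_basis_change A ft = g \<longleftrightarrow> sc_hom (transpose A) ft g"
proof -
  let ?B = "transpose (matrix_inv A)"
  have "?B ** transpose A = mat 1" and "transpose A ** ?B = mat 1"
    using matrix_inv_mult[OF assms] by (simp_all flip: matrix_transpose_mul)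
  then show ?thesis
    unfolding dual_basis_change_eq_sc_push_pull
    by (metis sc_push_pull_eq_iff sc_hom_inverse)
qed

lemma manin_isomorphic_iff_sc_hom:
  "manin_isomorphic f ft f2 ft2 \<longleftrightarrow> (\<exists>A. invertible A \<and> sc_hom A f2 f \<and> sc_hom (transpose A) ft ft2)"
  unfolding manin_isomorphic_def by (metis basis_change_eq_iff dual_basis_change_eq_iff)

lemma manin_isomorphic_sym:
  assumes "manin_isomorphic f ft f2 ft2"
  shows "manin_isomorphic f2 ft2 f ft"
proof -
  obtain A where A: "invertible A" "sc_hom A f2 f" "sc_hom (transpose A) ft ft2"
    using assms unfolding manin_isomorphic_iff_sc_hom by blast
  let ?B = "matrix_inv A"
  have inv: "A ** ?B = mat 1" "?B ** A = mat 1"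
    using matrix_inv_mult[OF A(1)] by simp_all
  then have "transpose A ** transpose ?B = mat 1" "transpose ?B ** transpose A = mat 1"
    by (simp_all flip: matrix_transpose_mul)
  moreover have "invertible ?B"
    using inv unfolding invertible_def by blast
  ultimately show ?thesis
    unfolding manin_isomorphic_iff_sc_hom using A inv by (metis sc_hom_inverse)
qed

lemma manin_isomorphic_trans:
  assumes "manin_isomorphic f ft f2 ft2" and "manin_isomorphic f2 ft2 f3 ft3"
  shows "manin_isomorphic f ft f3 ft3"
proof -
  obtain A where A: "invertible A" "sc_hom A f2 f" "sc_hom (transpose A) ft ft2"
    using assms(1) unfolding manin_isomorphic_iff_sc_hom by blast
  obtain B where B: "invertible B" "sc_hom B f3 f2" "sc_hom (transpose B) ft2 ft3"
    using assms(2) unfolding manin_isomorphic_iff_sc_hom by blast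
  have "invertible (A ** B)" "sc_hom (A ** B) f3 f" "sc_hom (transpose (A ** B)) ft ft3"
    using A B by (simp_all add: invertible_mult sc_hom_mult matrix_transpose_mul)
  then show ?thesis
    unfolding manin_isomorphic_iff_sc_hom by blast
qed

section \<open>Transport of the Jacobi identity to the double\<close>

lemma sc_push_pull_compose:
  fixes M N :: "'a::comm_semiring_1^'n^'n"
  assumes MN: "M ** N = mat 1"
  shows "(\<Sum>d\<in>UNIV. sc_push N (sc_pull M C) a b d * sc_push N (sc_pull M C) d c e)
    = (\<Sum>x\<in>UNIV. \<Sum>y\<in>UNIV. \<Sum>v\<in>UNIV. M$x$a * M$y$b * M$v$c *
         (\<Sum>z\<in>UNIV. \<Sum>w\<in>UNIV. C x y z * C z v w * N$e$w))"
proof -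
  define m where "m z = sc_pull M C a b z" for z
  define k where "k u = (\<Sum>v\<in>UNIV. \<Sum>w\<in>UNIV. M$v$c * (C u v w * N$e$w))" for u
  have left: "sc_push N (sc_pull M C) a b d = (\<Sum>z\<in>UNIV. N$d$z * m z)" for d
    by (simp add: sc_push_def m_def)
  have right: "sc_push N (sc_pull M C) d c e = (\<Sum>u\<in>UNIV. M$u$d * k u)" for d
  proof -
    have "sc_push N (sc_pull M C) d c e
        = (\<Sum>w\<in>UNIV. \<Sum>u\<in>UNIV. \<Sum>v\<in>UNIV. M$u$d * (M$v$c * (C u v w * N$e$w)))"
      by (simp add: sc_push_def sc_pull_def sum_distrib_left mult_ac)
    also have "\<dots> = (\<Sum>u\<in>UNIV. \<Sum>v\<in>UNIV. \<Sum>w\<in>UNIV. M$u$d * (M$v$c * (C u v w * N$e$w)))"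
      by (rule sum_rotate3[symmetric])
    finally show ?thesis
      by (simp add: k_def sum_distrib_left)
  qed
  have "(\<Sum>d\<in>UNIV. sc_push N (sc_pull M C) a b d * sc_push N (sc_pull M C) d c e) = (\<Sum>z\<in>UNIV. m z * k z)"
    unfolding left right by (rule sum_contract[OF MN])
  also have "\<dots> = (\<Sum>z\<in>UNIV. \<Sum>x\<in>UNIV. \<Sum>v\<in>UNIV. \<Sum>y\<in>UNIV. \<Sum>w\<in>UNIV.
      M$x$a * M$y$b * C x y z * (M$v$c * (C z v w * N$e$w)))"
    by (simp only: m_def k_def sc_pull_def sum_product)
  also have "\<dots> = (\<Sum>z\<in>UNIV. \<Sum>x\<in>UNIV. \<Sum>y\<in>UNIV. \<Sum>v\<in>UNIV. \<Sum>w\<in>UNIV.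
      M$x$a * M$y$b * C x y z * (M$v$c * (C z v w * N$e$w)))"
    by (rule sum.cong[OF refl], rule sum.cong[OF refl], rule sum.swap)
  also have "\<dots> = (\<Sum>x\<in>UNIV. \<Sum>y\<in>UNIV. \<Sum>v\<in>UNIV. M$x$a * M$y$b * M$v$c *
         (\<Sum>z\<in>UNIV. \<Sum>w\<in>UNIV. C x y z * C z v w * N$e$w))"
    by (subst sum_move_in3) (simp add: sum_distrib_left mult_ac)
  finally show ?thesis .
qed

lemma lie_sc_antisym: "lie_sc C \<Longrightarrow> C a b c = - C b a c"
  unfolding lie_sc_def by blast

lemma sc_push_pull_antisym:
  fixes M N :: "'a::comm_ring_1^'n^'n"
  assumes "\<And>a b c. C a b c = - C b a c"
  shows "sc_push N (sc_pull M C) a b c = - sc_push N (sc_pull M C) b a c"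
proof -
  have pull: "sc_pull M C a b k = - sc_pull M C b a k" for k
  proof -
    have "sc_pull M C b a k = (\<Sum>q\<in>UNIV. \<Sum>p\<in>UNIV. M$q$a * M$p$b * C p q k)"
      unfolding sc_pull_def by (subst sum.swap) (simp add: mult_ac)
    also have "\<dots> = - sc_pull M C a b k"
      unfolding sc_pull_def by (subst assms) (simp add: sum_negf)
    finally show ?thesis by simp
  qed
  show ?thesis
    unfolding sc_push_def by (subst pull) (simp add: sum_negf)
qed

lemma lie_sc_sc_push_pull:
  fixes M N :: "real^'n^'n"
  assumes MN: "M ** N = mat 1" and lie: "lie_sc C"
  shows "lie_sc (sc_push N (sc_pull M C))"
proof -
  let ?C' = "sc_push N (sc_pull M C)"
  have jacobi: "(\<Sum>z\<in>UNIV. C x y z * C z v w + C y v z * C z x w + C v x z * C z y w) = 0" for x y v w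
    using lie unfolding lie_sc_def by blast
  define H where "H e x y v = (\<Sum>z\<in>UNIV. \<Sum>w\<in>UNIV. C x y z * C z v w * N$e$w)" for e x y v
  have H_swap: "H e x y v = (\<Sum>w\<in>UNIV. (\<Sum>z\<in>UNIV. C x y z * C z v w) * N$e$w)" for e x y v
    unfolding H_def sum_distrib_right by (rule sum.swap)
  have H_cyclic: "H e x y v + H e y v x + H e v x y = 0" for e x y v
  proof -
    have "H e x y v + H e y v x + H e v x y
        = (\<Sum>w\<in>UNIV. (\<Sum>z\<in>UNIV. C x y z * C z v w + C y v z * C z x w + C v x z * C z y w) * N$e$w)"
      unfolding H_swap by (simp add: sum.distrib algebra_simps)
    then show ?thesis by (simp add: jacobi)
  qed
  have compose: "(\<Sum>d\<in>UNIV. ?C' a b d * ?C' d c e)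
      = (\<Sum>x\<in>UNIV. \<Sum>y\<in>UNIV. \<Sum>v\<in>UNIV. M$x$a * M$y$b * M$v$c * H e x y v)" for a b c e
    unfolding H_def by (rule sc_push_pull_compose[OF MN])
  txt \<open>The three terms of the Jacobi identity of ?C' differ only by a cyclic relabelling of the
    summation variables x, y, v.\<close>
  have cyclic: "(\<Sum>d\<in>UNIV. ?C' a b d * ?C' d c e + ?C' b c d * ?C' d a e + ?C' c a d * ?C' d b e)
      = (\<Sum>x\<in>UNIV. \<Sum>y\<in>UNIV. \<Sum>v\<in>UNIV. M$x$a * M$y$b * M$v$c * (H e x y v + H e y v x + H e v x y))"
    for a b c e
  proof -
    have "(\<Sum>d\<in>UNIV. ?C' b c d * ?C' d a e)
        = (\<Sum>x\<in>UNIV. \<Sum>y\<in>UNIV. \<Sum>v\<in>UNIV. M$x$a * M$y$b * M$v$c * H e y v x)"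
      unfolding compose by (subst sum_rotate3) (simp add: mult_ac)
    moreover have "(\<Sum>d\<in>UNIV. ?C' c a d * ?C' d b e)
        = (\<Sum>x\<in>UNIV. \<Sum>y\<in>UNIV. \<Sum>v\<in>UNIV. M$x$a * M$y$b * M$v$c * H e v x y)"
      unfolding compose by (subst sum_rotate3[symmetric]) (simp add: mult_ac)
    ultimately show ?thesis
      by (simp add: sum.distrib compose distrib_left)
  qed
  have "(\<Sum>d\<in>UNIV. ?C' a b d * ?C' d c e + ?C' b c d * ?C' d a e + ?C' c a d * ?C' d b e) = 0"
    for a b c e
    unfolding cyclic by (simp add: H_cyclic)
  then show ?thesis
    unfolding lie_sc_def using sc_push_pull_antisym[where C = C, OF lie_sc_antisym[OF lie]] by blast
qed

definition block_diag :: "'a::zero^'m^'m \<Rightarrow> 'a^'n^'n \<Rightarrow> 'a^('m + 'n)^('m + 'n)" where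
  "block_diag A B = (\<chi> x y. case (x, y) of (Inl i, Inl j) \<Rightarrow> A$i$j | (Inr i, Inr j) \<Rightarrow> B$i$j | _ \<Rightarrow> 0)"

lemma block_diag_mult:
  fixes A C :: "'a::semiring_1^'m::finite^'m" and B D :: "'a^'n::finite^'n"
  shows "block_diag A B ** block_diag C D = block_diag (A ** C) (B ** D)"
  by (simp add: vec_eq_iff matrix_matrix_mult_def block_diag_def sum_UNIV_Plus split: sum.split)

lemma block_diag_mat_1: "block_diag (mat 1) (mat 1) = (mat 1 :: 'a::semiring_1^('m::finite + 'n::finite)^('m + 'n))"
  by (simp add: vec_eq_iff block_diag_def mat_def split: sum.split)

text \<open>In the basis X_i, X~^i of the double, a change of basis A of G acts on G~ by the
  contragredient matrix, so on the double it acts block-diagonally.\<close>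

lemma double_sc_basis_change:
  "double_sc (basis_change A f) (dual_basis_change A ft)
    = sc_push (block_diag (matrix_inv A) (transpose A))
        (sc_pull (block_diag A (transpose (matrix_inv A))) (double_sc f ft))"
proof (intro ext)
  fix a b c
  show "double_sc (basis_change A f) (dual_basis_change A ft) a b c
    = sc_push (block_diag (matrix_inv A) (transpose A))
        (sc_pull (block_diag A (transpose (matrix_inv A))) (double_sc f ft)) a b c"
    by (cases a; cases b; cases c)
      (simp_all add: sc_push_def sc_pull_def block_diag_def transpose_def sum_UNIV_Plus double_sc_def
        basis_change_def dual_basis_change_def sum_UNIV_idx algebra_simps)
qed

lemma lie_double_basis_change:
  assumes "invertible A" and "lie_sc (double_sc f ft)"
  shows "lie_sc (double_sc (basis_change A f) (dual_basis_change A ft))"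
  unfolding double_sc_basis_change
proof (rule lie_sc_sc_push_pull[OF _ assms(2)])
  show "block_diag A (transpose (matrix_inv A)) ** block_diag (matrix_inv A) (transpose A) = mat 1"
    using matrix_inv_mult[OF assms(1)]
    by (simp add: block_diag_mult block_diag_mat_1 flip: matrix_transpose_mul)
qed

section \<open>Manin triples over Bianchi III\<close>

definition dual_sc :: "real \<Rightarrow> real \<Rightarrow> real \<Rightarrow> real \<Rightarrow> sconst" where
  "dual_sc S P U R = sc3 (vec3 S P P) (vec3 U R R) (vec3 (- S) (- P) (- P))"

text \<open>The Jacobi identities of the double with two arguments in G are linear in the dual
  structure constants; the one with two arguments in G~ gives the quadratic constraint.\<close>

lemma lie_double_bianchiIII_constraints:
  assumes "lie_sc (double_sc bianchiIII ft)"
  shows "ft I3 I1 I1 = - ft I1 I2 I1" and "ft I2 I3 I3 = ft I2 I3 I2" and "ft I1 I2 I3 = ft I1 I2 I2"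
    and "ft I3 I1 I2 = - ft I1 I2 I2" and "ft I3 I1 I3 = - ft I1 I2 I2"
    and "ft I1 I2 I2 * ft I2 I3 I1 = ft I2 I3 I2 * ft I1 I2 I1"
proof -
  let ?D = "double_sc bianchiIII ft"
  have antisym: "ft i j k = - ft j i k" for i j k
    using lie_sc_antisym[OF assms, of "Inr i" "Inr j" "Inr k"] by (simp add: double_sc_def)
  have jacobi: "(\<Sum>d\<in>UNIV. ?D a b d * ?D d c e + ?D b c d * ?D d a e + ?D c a d * ?D d b e) = 0" for a b c e
    using assms unfolding lie_sc_def by blast
  note simps = sum_UNIV_Plus sum_UNIV_idx double_sc_def bianchiIII_def sc3_def vec3_def
    antisym[of I2 I1] antisym[of I3 I2] antisym[of I1 I3] antisym[of i i for i, simplified]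
  have j1: "ft I1 I2 I3 + ft I3 I1 I2 = 0"
    using jacobi[of "Inl I1" "Inl I2" "Inr I1" "Inl I2"] by (simp add: simps; linarith)
  have j2: "ft I1 I2 I2 + ft I3 I1 I3 = 0"
    using jacobi[of "Inl I1" "Inl I2" "Inr I1" "Inl I3"] by (simp add: simps; linarith)
  have j3: "ft I2 I3 I2 - ft I2 I3 I3 = ft I1 I2 I1 + ft I3 I1 I1"
    using jacobi[of "Inl I1" "Inl I2" "Inr I2" "Inl I3"] by (simp add: simps; linarith)
  have j4: "ft I2 I3 I3 - ft I2 I3 I2 = ft I1 I2 I1 + ft I3 I1 I1"
    using jacobi[of "Inl I1" "Inl I3" "Inr I2" "Inl I3"] by (simp add: simps; linarith)
  have j5: "ft I1 I2 I3 - ft I1 I2 I2 = ft I3 I1 I2 - ft I3 I1 I3"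
    using jacobi[of "Inl I2" "Inl I3" "Inr I2" "Inl I3"] by (simp add: simps; linarith)
  have j6: "ft I1 I2 I1 * ft I2 I3 I2 - ft I1 I2 I2 * ft I2 I3 I1
      + ft I2 I3 I1 * ft I3 I1 I3 - ft I2 I3 I3 * ft I3 I1 I1 = 0"
    using jacobi[of "Inl I1" "Inr I1" "Inr I2" "Inl I3"] by (simp add: simps algebra_simps; linarith)
  show lin: "ft I3 I1 I1 = - ft I1 I2 I1" "ft I2 I3 I3 = ft I2 I3 I2" "ft I1 I2 I3 = ft I1 I2 I2"
    "ft I3 I1 I2 = - ft I1 I2 I2" "ft I3 I1 I3 = - ft I1 I2 I2"
    using j1 j2 j3 j4 j5 by linarith+
  show "ft I1 I2 I2 * ft I2 I3 I1 = ft I2 I3 I2 * ft I1 I2 I1"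
    using j6 unfolding lin by (simp add: algebra_simps)
qed

lemma lie_double_bianchiIII_eq_dual_sc:
  assumes "lie_sc (double_sc bianchiIII ft)"
  shows "\<exists>S P U R. ft = dual_sc S P U R \<and> P * U = R * S"
proof -
  have antisym: "ft i j k = - ft j i k" for i j k
    using lie_sc_antisym[OF assms, of "Inr i" "Inr j" "Inr k"] by (simp add: double_sc_def)
  have "ft = dual_sc (ft I1 I2 I1) (ft I1 I2 I2) (ft I2 I3 I1) (ft I2 I3 I2)"
    using lie_double_bianchiIII_constraints(1-5)[OF assms]
    unfolding dual_sc_def
    by (intro ext, simp add: sc3_def vec3_def antisym[of I2 I1] antisym[of I3 I2] antisym[of I1 I3]
        antisym[of i i for i, simplified] split: idx.split)
  then show ?thesis
    using lie_double_bianchiIII_constraints(6)[OF assms] by blast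
qed

definition bianchiIII_aut :: "real \<Rightarrow> real \<Rightarrow> real \<Rightarrow> real \<Rightarrow> real^idx^idx" where
  "bianchiIII_aut x w y z =
     (\<chi> k i. case k of I1 \<Rightarrow> vec3 1 0 0 i | I2 \<Rightarrow> vec3 x y z i | I3 \<Rightarrow> vec3 w z y i)"

lemma bianchiIII_aut_nth:
  "bianchiIII_aut x w y z $ k $ i =
     (case k of I1 \<Rightarrow> vec3 1 0 0 i | I2 \<Rightarrow> vec3 x y z i | I3 \<Rightarrow> vec3 w z y i)"
  by (simp add: bianchiIII_aut_def)

lemma sc_hom_bianchiIII_aut: "sc_hom (bianchiIII_aut x w y z) bianchiIII bianchiIII"
  unfolding sc_hom_def sc_push_def sc_pull_def fun_eq_iff all_idx sum_UNIV_idx bianchiIII_aut_nth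
  by (simp add: bianchiIII_def sc3_def vec3_def algebra_simps)

lemma invertible_matrix_vector_eq_0:
  fixes A :: "'a::field^'n^'n"
  assumes "invertible A" and "A *v v = 0"
  shows "v = 0"
  using assms matrix_left_invertible_ker unfolding invertible_def by blast

lemma vec3_0_1_neq_0: "vec_lambda (vec3 0 1 c) \<noteq> 0"
  by (simp add: vec_eq_iff all_idx vec3_def)

lemma invertible_bianchiIII_aut_iff: "invertible (bianchiIII_aut x w y z) \<longleftrightarrow> y * y \<noteq> z * z"
proof
  assume inv: "invertible (bianchiIII_aut x w y z)"
  show "y * y \<noteq> z * z"
  proof
    assume "y * y = z * z"
    then have "y = z \<or> y = - z"
      by (simp add: square_eq_iff)
    then have "bianchiIII_aut x w y z *v vec_lambda (vec3 0 1 (if y = z then - 1 else 1)) = 0"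
      by (auto simp: vec_eq_iff matrix_vector_mult_def all_idx sum_UNIV_idx bianchiIII_aut_nth vec3_def)
    then show False
      using invertible_matrix_vector_eq_0[OF inv] vec3_0_1_neq_0 by blast
  qed
next
  assume "y * y \<noteq> z * z"
  define d where "d = y * y - z * z"
  have "d \<noteq> 0"
    using \<open>y * y \<noteq> z * z\<close> d_def by simp
  let ?B = "bianchiIII_aut ((z * w - y * x) / d) ((z * x - y * w) / d) (y / d) (- z / d)"
  have "bianchiIII_aut x w y z ** ?B = mat 1" and "?B ** bianchiIII_aut x w y z = mat 1"
    using \<open>d \<noteq> 0\<close>
    by (simp_all add: vec_eq_iff matrix_matrix_mult_def mat_def all_idx sum_UNIV_idx bianchiIII_aut_nth
        vec3_def field_simps, simp_all add: d_def algebra_simps)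
  then show "invertible (bianchiIII_aut x w y z)"
    unfolding invertible_def by blast
qed

lemma bianchiIII_endomorphism_equations:
  assumes "sc_hom F bianchiIII bianchiIII"
  shows "F$I1$I2 + F$I1$I3 = 0"
    and "F$I1$I2 * (F$I2$I1 + F$I3$I1) - F$I1$I1 * (F$I2$I2 + F$I3$I2) + F$I2$I2 + F$I2$I3 = 0"
    and "F$I1$I2 * (F$I2$I1 + F$I3$I1) - F$I1$I1 * (F$I2$I2 + F$I3$I2) + F$I3$I2 + F$I3$I3 = 0"
    and "F$I1$I3 * (F$I2$I1 + F$I3$I1) - F$I1$I1 * (F$I2$I3 + F$I3$I3) + F$I2$I2 + F$I2$I3 = 0"
    and "F$I1$I3 * (F$I2$I2 + F$I3$I2) - F$I1$I2 * (F$I2$I3 + F$I3$I3) = 0"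
proof -
  have eq: "sc_push F bianchiIII i j m = sc_pull F bianchiIII i j m" for i j m
    using assms by (simp add: sc_hom_def)
  note simps = sc_push_def sc_pull_def sum_UNIV_idx bianchiIII_def sc3_def vec3_def algebra_simps
  show "F$I1$I2 + F$I1$I3 = 0"
    using eq[of I1 I2 I1] by (simp add: simps; linarith)
  show "F$I1$I2 * (F$I2$I1 + F$I3$I1) - F$I1$I1 * (F$I2$I2 + F$I3$I2) + F$I2$I2 + F$I2$I3 = 0"
    using eq[of I1 I2 I2] by (simp add: simps; linarith)
  show "F$I1$I2 * (F$I2$I1 + F$I3$I1) - F$I1$I1 * (F$I2$I2 + F$I3$I2) + F$I3$I2 + F$I3$I3 = 0"
    using eq[of I1 I2 I3] by (simp add: simps; linarith)
  show "F$I1$I3 * (F$I2$I1 + F$I3$I1) - F$I1$I1 * (F$I2$I3 + F$I3$I3) + F$I2$I2 + F$I2$I3 = 0"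
    using eq[of I1 I3 I2] by (simp add: simps; linarith)
  show "F$I1$I3 * (F$I2$I2 + F$I3$I2) - F$I1$I2 * (F$I2$I3 + F$I3$I3) = 0"
    using eq[of I2 I3 I2] by (simp add: simps; linarith)
qed

lemma bianchiIII_automorphism_eq_aut:
  assumes inv: "invertible F" and hom: "sc_hom F bianchiIII bianchiIII"
  shows "\<exists>x w y z. F = bianchiIII_aut x w y z \<and> y * y \<noteq> z * z"
proof -
  note e = bianchiIII_endomorphism_equations[OF hom]
  define c where "c = F$I2$I2 + F$I2$I3"
  have c': "F$I3$I2 + F$I3$I3 = c"
    using e(2,3) c_def by linarith
  have "c \<noteq> 0"
  proof
    assume "c = 0"
    then have "F *v vec_lambda (vec3 0 1 1) = 0"
      using e(1) c' c_def by (simp add: vec_eq_iff matrix_vector_mult_def all_idx sum_UNIV_idx vec3_def)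
    then show False
      using invertible_matrix_vector_eq_0[OF inv] vec3_0_1_neq_0 by blast
  qed
  have F13: "F$I1$I3 = - F$I1$I2"
    using e(1) by linarith
  have "F$I1$I2 * (2 * c) = F$I1$I2 * (F$I2$I2 + F$I2$I3) + F$I1$I2 * (F$I3$I2 + F$I3$I3)"
    using c' c_def by (simp add: algebra_simps)
  also have "\<dots> = - (F$I1$I3 * (F$I2$I2 + F$I3$I2) - F$I1$I2 * (F$I2$I3 + F$I3$I3))"
    unfolding F13 by (simp add: algebra_simps)
  finally have F12: "F$I1$I2 = 0"
    using e(5) \<open>c \<noteq> 0\<close> by simp
  have F11_c: "F$I1$I1 * (F$I2$I2 + F$I3$I2) = c" "F$I1$I1 * (F$I2$I3 + F$I3$I3) = c"
    using e(2,4) F12 F13 c_def by simp_all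
  have "F$I1$I1 * (2 * c) = F$I1$I1 * ((F$I2$I2 + F$I2$I3) + (F$I3$I2 + F$I3$I3))"
    using c' c_def by simp
  also have "\<dots> = F$I1$I1 * (F$I2$I2 + F$I3$I2) + F$I1$I1 * (F$I2$I3 + F$I3$I3)"
    by (simp add: algebra_simps)
  finally have F11: "F$I1$I1 = 1"
    using F11_c \<open>c \<noteq> 0\<close> by simp
  then have "F$I3$I2 = F$I2$I3" and "F$I3$I3 = F$I2$I2"
    using F11_c c_def by simp_all
  then have "F = bianchiIII_aut (F$I2$I1) (F$I3$I1) (F$I2$I2) (F$I2$I3)"
    using F11 F12 F13 by (simp add: vec_eq_iff all_idx bianchiIII_aut_nth vec3_def)
  then show ?thesis
    using inv invertible_bianchiIII_aut_iff by metis
qed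

lemma sc_hom_transpose_aut_dual_sc:
  "sc_hom (transpose (bianchiIII_aut x w y z))
     (dual_sc (s * (y + z) - p * (x + w)) p
        (u * (y * y - z * z) - (r * (y - z) - p * (w - x)) * (x + w) - s * (y + z) * (w - x))
        (r * (y - z) - p * (w - x)))
     (dual_sc s p u r)"
  unfolding sc_hom_def sc_push_def sc_pull_def fun_eq_iff all_idx sum_UNIV_idx transpose_def vec_lambda_beta
  by (simp add: bianchiIII_aut_nth dual_sc_def sc3_def vec3_def algebra_simps)

lemma sc_hom_transpose_aut_dual_sc_iff:
  assumes "y * y \<noteq> z * z"
  shows "sc_hom (transpose (bianchiIII_aut x w y z)) (dual_sc S P U R) (dual_sc s p u r) \<longleftrightarrow>
    p = P \<and> s * (y + z) = S + P * (x + w) \<and> r * (y - z) = R + P * (w - x) \<and>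
    u * (y * y - z * z) = U + R * (x + w) + s * (y + z) * (w - x)"
    (is "?hom \<longleftrightarrow> ?eqs")
proof
  have "y * y - z * z = (y + z) * (y - z)"
    by (simp add: algebra_simps)
  then have "y + z \<noteq> 0"
    using assms by auto
  assume ?hom
  then have eq: "sc_push (transpose (bianchiIII_aut x w y z)) (dual_sc S P U R) i j k
      = sc_pull (transpose (bianchiIII_aut x w y z)) (dual_sc s p u r) i j k" for i j k
    by (simp add: sc_hom_def)
  note simps = sc_push_def sc_pull_def sum_UNIV_idx transpose_def bianchiIII_aut_nth dual_sc_def sc3_def vec3_def
  have e1: "s * (y + z) = S + P * (x + w)"
    using eq[of I1 I2 I1] by (simp add: simps algebra_simps)
  have e2: "p * (y + z) = P * (y + z)"
    using eq[of I1 I2 I2] by (simp add: simps algebra_simps)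
  have e3: "(y + z) * (r * (y - z)) = (y + z) * (R + p * (w - x))"
    using eq[of I2 I3 I2] by (simp add: simps algebra_simps)
  have e4: "u * (y * y - z * z) = U + R * (x + w) + s * (y + z) * (w - x)"
    using eq[of I2 I3 I1] by (simp add: simps algebra_simps)
  show ?eqs
    using e1 e2 e3 e4 \<open>y + z \<noteq> 0\<close> by simp
next
  assume ?eqs
  then have "P = p" "s * (y + z) = S + p * (x + w)" "r * (y - z) = R + p * (w - x)"
    "u * (y * y - z * z) = U + R * (x + w) + s * (y + z) * (w - x)"
    by auto
  then have "S = s * (y + z) - p * (x + w)" "P = p" "R = r * (y - z) - p * (w - x)"
    and "U = u * (y * y - z * z) - R * (x + w) - s * (y + z) * (w - x)"
    by linarith+
  then show ?hom
    using sc_hom_transpose_aut_dual_sc by simp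
qed

lemma manin_isomorphic_bianchiIII_iff:
  "manin_isomorphic bianchiIII ft bianchiIII ft2 \<longleftrightarrow>
    (\<exists>x w y z. y * y \<noteq> z * z \<and> sc_hom (transpose (bianchiIII_aut x w y z)) ft ft2)"
proof
  assume "manin_isomorphic bianchiIII ft bianchiIII ft2"
  then obtain A where "invertible A" "sc_hom A bianchiIII bianchiIII" "sc_hom (transpose A) ft ft2"
    unfolding manin_isomorphic_iff_sc_hom by blast
  then show "\<exists>x w y z. y * y \<noteq> z * z \<and> sc_hom (transpose (bianchiIII_aut x w y z)) ft ft2"
    using bianchiIII_automorphism_eq_aut by blast
next
  assume "\<exists>x w y z. y * y \<noteq> z * z \<and> sc_hom (transpose (bianchiIII_aut x w y z)) ft ft2"
  then show "manin_isomorphic bianchiIII ft bianchiIII ft2"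
    unfolding manin_isomorphic_iff_sc_hom
    using invertible_bianchiIII_aut_iff sc_hom_bianchiIII_aut by blast
qed

lemma manin_isomorphic_dual_sc_iff:
  "manin_isomorphic bianchiIII (dual_sc S P U R) bianchiIII (dual_sc s p u r) \<longleftrightarrow>
    (\<exists>x w y z. y * y \<noteq> z * z \<and> p = P \<and> s * (y + z) = S + P * (x + w) \<and>
      r * (y - z) = R + P * (w - x) \<and> u * (y * y - z * z) = U + R * (x + w) + s * (y + z) * (w - x))"
  unfolding manin_isomorphic_bianchiIII_iff
  by (simp add: sc_hom_transpose_aut_dual_sc_iff cong: conj_cong)

lemma mem_normal_forms_iff:
  "g \<in> normal_forms \<longleftrightarrow> (\<exists>S P U R. g = dual_sc S P U R \<and>
     (P = 0 \<and> (S, U, R) \<in> {(0, 0, 0), (0, 1, 0), (0, 0, 1), (1, 0, 0)} \<or> P \<noteq> 0 \<and> S = 0 \<and> U = 0 \<and> R = 0))"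
    (is "_ \<longleftrightarrow> (\<exists>S P U R. g = dual_sc S P U R \<and> ?params S P U R)")
proof -
  have dual_eqs: "dual_I = dual_sc 0 0 0 0" "dual_II = dual_sc 0 0 1 0" "dual_III_ii = dual_sc 0 0 0 1"
    "dual_III_iii = dual_sc 1 0 0 0" "dual_III_i b = dual_sc 0 (- b) 0 0" for b
    by (simp_all add: dual_I_def dual_II_def dual_III_i_def dual_III_ii_def dual_III_iii_def dual_sc_def)
  show ?thesis
  proof
    assume "g \<in> normal_forms"
    then consider "g = dual_sc 0 0 0 0" | "g = dual_sc 0 0 1 0" | "g = dual_sc 0 0 0 1"
      | "g = dual_sc 1 0 0 0" | b where "b \<noteq> 0" "g = dual_sc 0 (- b) 0 0"
      unfolding normal_forms_def dual_eqs by blast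
    then show "\<exists>S P U R. g = dual_sc S P U R \<and> ?params S P U R"
      by cases (force+)
  next
    assume "\<exists>S P U R. g = dual_sc S P U R \<and> ?params S P U R"
    then obtain S P U R where "g = dual_sc S P U R" "?params S P U R"
      by blast
    then show "g \<in> normal_forms"
      unfolding normal_forms_def dual_eqs
      by (auto intro: exI[of _ "- P"])
  qed
qed

lemma dual_sc_normal_form_exists:
  assumes "P * U = R * S"
  shows "\<exists>g\<in>normal_forms. manin_isomorphic bianchiIII (dual_sc S P U R) bianchiIII g"
proof -
  have iso: "manin_isomorphic bianchiIII (dual_sc S P U R) bianchiIII (dual_sc s p u r)"
    if "y * y \<noteq> z * z" "p = P" "s * (y + z) = S + P * (x + w)" "r * (y - z) = R + P * (w - x)"
      "u * (y * y - z * z) = U + R * (x + w) + s * (y + z) * (w - x)" for x w y z s p u r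
    unfolding manin_isomorphic_dual_sc_iff using that by blast
  consider "P \<noteq> 0" | "P = 0" "R \<noteq> 0" | "P = 0" "R = 0" "S \<noteq> 0" | "P = 0" "R = 0" "S = 0" "U \<noteq> 0"
    | "P = 0" "R = 0" "S = 0" "U = 0"
    by blast
  then show ?thesis
  proof cases
    case 1
    have "dual_sc 0 P 0 0 \<in> normal_forms"
      using 1 unfolding mem_normal_forms_iff by force
    moreover have "manin_isomorphic bianchiIII (dual_sc S P U R) bianchiIII (dual_sc 0 P 0 0)"
      by (rule iso[where y = 1 and z = 0 and x = "(R - S) / (2 * P)" and w = "- (S + R) / (2 * P)"])
        (use 1 assms in \<open>auto simp: field_simps\<close>)
    ultimately show ?thesis by blast
  next
    case 2
    then have "S = 0"
      using assms by simp
    have "dual_sc 0 0 0 1 \<in> normal_forms"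
      unfolding mem_normal_forms_iff by force
    moreover have "manin_isomorphic bianchiIII (dual_sc S P U R) bianchiIII (dual_sc 0 0 0 1)"
      by (rule iso[where y = "(1 + R) / 2" and z = "(1 - R) / 2" and x = "- U / (2 * R)" and w = "- U / (2 * R)"])
        (use 2 \<open>S = 0\<close> in \<open>auto simp: field_simps\<close>)
    ultimately show ?thesis by blast
  next
    case 3
    have "dual_sc 1 0 0 0 \<in> normal_forms"
      unfolding mem_normal_forms_iff by force
    moreover have "manin_isomorphic bianchiIII (dual_sc S P U R) bianchiIII (dual_sc 1 0 0 0)"
      by (rule iso[where y = "(S + 1) / 2" and z = "(S - 1) / 2" and x = "U / (2 * S)" and w = "- U / (2 * S)"])
        (use 3 in \<open>auto simp: field_simps\<close>)
    ultimately show ?thesis by blast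
  next
    case 4
    have "dual_sc 0 0 1 0 \<in> normal_forms"
      unfolding mem_normal_forms_iff by force
    moreover have "manin_isomorphic bianchiIII (dual_sc S P U R) bianchiIII (dual_sc 0 0 1 0)"
      by (rule iso[where y = "(U + 1) / 2" and z = "(U - 1) / 2" and x = 0 and w = 0])
        (use 4 in \<open>auto simp: field_simps\<close>)
    ultimately show ?thesis by blast
  next
    case 5
    have "dual_sc 0 0 0 0 \<in> normal_forms"
      unfolding mem_normal_forms_iff by force
    moreover have "manin_isomorphic bianchiIII (dual_sc S P U R) bianchiIII (dual_sc 0 0 0 0)"
      by (rule iso[where y = 1 and z = 0 and x = 0 and w = 0]) (use 5 in auto)
    ultimately show ?thesis by blast
  qed
qed

lemma normal_forms_unique:
  assumes "g \<in> normal_forms" and "g' \<in> normal_forms"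
    and "manin_isomorphic bianchiIII g bianchiIII g'"
  shows "g = g'"
proof -
  obtain S P U R where g: "g = dual_sc S P U R"
    and par: "P = 0 \<and> (S, U, R) \<in> {(0, 0, 0), (0, 1, 0), (0, 0, 1), (1, 0, 0)} \<or> P \<noteq> 0 \<and> S = 0 \<and> U = 0 \<and> R = 0"
    using assms(1) unfolding mem_normal_forms_iff by blast
  obtain s p u r where g': "g' = dual_sc s p u r"
    and par': "p = 0 \<and> (s, u, r) \<in> {(0, 0, 0), (0, 1, 0), (0, 0, 1), (1, 0, 0)} \<or> p \<noteq> 0 \<and> s = 0 \<and> u = 0 \<and> r = 0"
    using assms(2) unfolding mem_normal_forms_iff by blast
  obtain x w y z where "y * y \<noteq> z * z" "p = P" and e1: "s * (y + z) = S + P * (x + w)"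
    and e2: "r * (y - z) = R + P * (w - x)"
    and e3: "u * (y * y - z * z) = U + R * (x + w) + s * (y + z) * (w - x)"
    using assms(3) unfolding g g' manin_isomorphic_dual_sc_iff by blast
  have "y * y - z * z = (y + z) * (y - z)"
    by (simp add: algebra_simps)
  then have yz: "y + z \<noteq> 0" "y - z \<noteq> 0" "y * y - z * z \<noteq> 0"
    using \<open>y * y \<noteq> z * z\<close> by auto
  have "S = s \<and> U = u \<and> R = r"
  proof (cases "P = 0")
    case True
    then have "s = 0 \<longleftrightarrow> S = 0" "r = 0 \<longleftrightarrow> R = 0"
      using e1 e2 yz by auto
    moreover have "u = 0 \<longleftrightarrow> U = 0" if "S = 0" "R = 0"
      using e3 yz that \<open>s = 0 \<longleftrightarrow> S = 0\<close> by auto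
    ultimately show ?thesis
      using par par' True \<open>p = P\<close> by auto
  next
    case False
    then show ?thesis
      using par par' \<open>p = P\<close> by auto
  qed
  then show ?thesis
    using g g' \<open>p = P\<close> by simp
qed

theorem mainTheorem7:
  fixes f' ft' :: sconst
  assumes "manin_triple f' ft'"
    and "lie_isomorphic f' bianchiIII"
  shows "\<exists>!g. g \<in> normal_forms \<and> manin_isomorphic f' ft' bianchiIII g"
proof -
  obtain A where A: "invertible A" "basis_change A f' = bianchiIII"
    using assms(2) unfolding lie_isomorphic_def by blast
  define ft where "ft = dual_basis_change A ft'"
  have iso: "manin_isomorphic f' ft' bianchiIII ft"
    unfolding manin_isomorphic_def ft_def using A by blast
  have "lie_sc (double_sc bianchiIII ft)"
    using lie_double_basis_change[OF A(1)] assms(1) A(2) unfolding manin_triple_def ft_def by metis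
  then obtain S P U R where "ft = dual_sc S P U R" "P * U = R * S"
    using lie_double_bianchiIII_eq_dual_sc by blast
  then obtain g where g: "g \<in> normal_forms" "manin_isomorphic bianchiIII ft bianchiIII g"
    using dual_sc_normal_form_exists by blast
  show ?thesis
  proof (rule ex1I)
    show "g \<in> normal_forms \<and> manin_isomorphic f' ft' bianchiIII g"
      using g iso manin_isomorphic_trans by blast
  next
    fix g' assume "g' \<in> normal_forms \<and> manin_isomorphic f' ft' bianchiIII g'"
    then show "g' = g"
      using g iso by (meson manin_isomorphic_sym manin_isomorphic_trans normal_forms_unique)
  qed
qed

end
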